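(* Let $\mathbb G=V_1\times V_2$ be a step-two Carnot group with $\mathcal A(V_1\times V_2)\subsetneq\mathcal A_h(\mathbb G)$. Then there are $x_1,x_2,x_3\in V_1$ such that $\operatorname{Lie}(x_1,x_2,x_3)$ is isomorphic to $\mathbb F_3$ (equivalently, $[x_1,x_2],[x_1,x_3],[x_2,x_3]$ are linearly independent). In addition, there is a bilinear map $b:V_1\times V_2\to\mathbb R$ such that $b(x,[x,x'])=0$ for all $x,x'\in V_1$ and $b(x_1,[x_2,x_3])=1$.
   Context: A step-two Carnot group is $\mathbb G=V_1\times V_2$ ($V_1,V_2$ finite-dimensional real vector spaces, $V_2\ne\{0\}$) with a bilinear skew-symmetric $[\cdot,\cdot]:V_1\times V_1\to V_2$ whose image spans $V_2$, and group law $(x,z)\cdot(x',z')=(x+x',z+z'+[x,x'])$. $\mathcal A_h(\mathbb G)$ is the space of maps $f:\mathbb G\to\mathbb R$ such that for all $(x,z)\in\mathbb G$, $y\in V_1$, $t\mapsto f((x,z)\cdot(ty,0))$ is affine; $\mathcal A(V_1\times V_2)$ is the space of maps affine in the usual sense. For $x_1,x_2,x_3\in V_1$, $\operatorname{Lie}(x_1,x_2,x_3):=\operatorname{span}\{x_1,x_2,x_3\}\times\operatorname{span}\{[x_i,x_j]:i,j\in\{1,2,3\}\}$ with the restricted bracket; it is isomorphic (via a bijective Carnot morphism) to $\mathbb F_3=\Lambda^1(\mathbb R^3)\times\Lambda^2(\mathbb R^3)$ (bracket $\theta\wedge\theta'$) exactly when $\dim\operatorname{span}\{[x_i,x_j]\}=3$.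 *)

theory Defs
  imports "HOL-Analysis.Analysis"
begin

text \<open>Step-two Carnot group structure on V1 x V2, V1 = 'a, V2 = 'b (finite-dim real spaces).\<close>

definition step2_carnot :: "('a::euclidean_space \<Rightarrow> 'a \<Rightarrow> 'b::euclidean_space) \<Rightarrow> bool" where
  "step2_carnot br \<longleftrightarrow> bilinear br \<and> (\<forall>x y. br x y = - br y x)
     \<and> span (range (\<lambda>(x, y). br x y)) = UNIV"

definition carnot_mult :: "('a::real_vector \<Rightarrow> 'a \<Rightarrow> 'b::real_vector) \<Rightarrow> 'a \<times> 'b \<Rightarrow> 'a \<times> 'b \<Rightarrow> 'a \<times> 'b" where
  "carnot_mult br p q = (fst p + fst q, snd p + snd q + br (fst p) (fst q))"

definition affine_real_fun :: "(real \<Rightarrow> real) \<Rightarrow> bool" where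
  "affine_real_fun g \<longleftrightarrow> (\<exists>a c. \<forall>t. g t = a * t + c)"

definition affine_maps :: "('a::real_vector \<times> 'b::real_vector \<Rightarrow> real) set" where
  "affine_maps = {f. \<exists>l c. linear l \<and> (\<forall>v. f v = l v + c)}"

definition h_affine_maps :: "('a::real_vector \<Rightarrow> 'a \<Rightarrow> 'b::real_vector) \<Rightarrow> ('a \<times> 'b \<Rightarrow> real) set" where
  "h_affine_maps br = {f. \<forall>p y. affine_real_fun (\<lambda>t. f (carnot_mult br p (t *\<^sub>R y, 0)))}"

end

theory Submission
  imports Defs
begin

(* Vertical differences vdiff v F (x, z) = F (x, z + v) - F (x, z) preserve horizontal affinity,
   and along a bracket w the map t \<mapsto> F (x, z + t w) is affine, so vdiff w (vdiff w F) = 0.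
   Differentiating a non-affine horizontally affine map along a basis of brackets as long as
   possible therefore ends at a non-affine horizontally affine G all of whose vertical differences
   are affine.  Such a G has the form G (0, 0) + \<lambda> x + \<mu> z + Q (z, z) / 2 + B (x, z) with
   \<lambda>, \<mu> linear, B and Q bilinear, and Q (w, w) = 0 for brackets w.  Moreover B (y, [x, y]) = 0,
   because \<lambda> is homogeneous while t \<mapsto> \<lambda> (x + t y) - t\<^sup>2 B (y, [x, y]) is affine.
   As G is not affine, B or Q is non-zero, and B, respectively (x, z) \<mapsto> Q ([x, u], z) for a
   suitable u, normalised at a bracket, is the required form b.  On the brackets [x1, x2],
   [x1, x3], [x2, x3] the functionals b x3, b x2, b x1 take the values of a signed permutation
   matrix, which gives their independence. *)

lemma affine_real_fun_iff: "affine_real_fun g \<longleftrightarrow> (\<forall>t. g t = g 0 + t * (g 1 - g 0))"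
  unfolding affine_real_fun_def
proof
  assume "\<exists>a c. \<forall>t. g t = a * t + c"
  then show "\<forall>t. g t = g 0 + t * (g 1 - g 0)" by (auto simp: algebra_simps)
next
  assume "\<forall>t. g t = g 0 + t * (g 1 - g 0)"
  then show "\<exists>a c. \<forall>t. g t = a * t + c" by (metis add.commute mult.commute)
qed

lemma affine_real_fun_add:
  "affine_real_fun g \<Longrightarrow> affine_real_fun h \<Longrightarrow> affine_real_fun (\<lambda>t. g t + h t)"
  unfolding affine_real_fun_def by (metis (no_types, opaque_lifting) add.assoc add.left_commute distrib_right)

lemma affine_real_fun_scale: "affine_real_fun g \<Longrightarrow> affine_real_fun (\<lambda>t. c * g t)"
  unfolding affine_real_fun_def by (metis (no_types, opaque_lifting) distrib_left mult.assoc)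

lemma affine_real_fun_diff:
  "affine_real_fun g \<Longrightarrow> affine_real_fun h \<Longrightarrow> affine_real_fun (\<lambda>t. g t - h t)"
  unfolding affine_real_fun_def by (metis (no_types, opaque_lifting) add_diff_add left_diff_distrib)

lemma additive_homogeneous_on_spanning_imp_linear:
  fixes g :: "'a::real_vector \<Rightarrow> 'b::real_vector"
  assumes add: "\<And>u v. g (u + v) = g u + g v"
    and hom: "\<And>c w. w \<in> C \<Longrightarrow> g (c *\<^sub>R w) = c *\<^sub>R g w"
    and spanning: "span C = UNIV"
  shows "linear g"
proof -
  let ?S = "{v. \<forall>c. g (c *\<^sub>R v) = c *\<^sub>R g v}"
  have "g 0 = 0" using add[of 0 0] by simp
  then have "subspace ?S" by (auto simp: subspace_def add scaleR_add_right)
  then have "span C \<subseteq> ?S" using hom by (intro span_minimal) auto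
  then show ?thesis using spanning by (auto intro!: linearI add)
qed

lemma affine_maps_iff_linear: "f \<in> affine_maps \<longleftrightarrow> linear (\<lambda>v. f v - f 0)"
proof
  assume "f \<in> affine_maps"
  then obtain l c where "linear l" "\<And>v. f v = l v + c" unfolding affine_maps_def by blast
  moreover have "l 0 = 0" using \<open>linear l\<close> by (rule linear_0)
  ultimately show "linear (\<lambda>v. f v - f 0)" by simp
next
  assume "linear (\<lambda>v. f v - f 0)"
  then show "f \<in> affine_maps" unfolding affine_maps_def by force
qed

lemma affine_maps_zero: "(\<lambda>_. 0) \<in> affine_maps"
  by (simp add: affine_maps_iff_linear linear_zero)

lemma affine_maps_add: "f \<in> affine_maps \<Longrightarrow> g \<in> affine_maps \<Longrightarrow> (\<lambda>v. f v + g v) \<in> affine_maps"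
  unfolding affine_maps_iff_linear by (drule (1) linear_compose_add) (simp add: algebra_simps)

lemma affine_maps_scale: "f \<in> affine_maps \<Longrightarrow> (\<lambda>v. c * f v) \<in> affine_maps"
  unfolding affine_maps_iff_linear
  by (drule linear_compose_scale_right[where c = c]) (simp add: algebra_simps)

lemma affine_maps_translate:
  assumes "f \<in> affine_maps"
  shows "(\<lambda>v. f (v + u)) \<in> affine_maps"
proof -
  have l: "linear (\<lambda>v. f v - f 0)" using assms by (simp add: affine_maps_iff_linear)
  have "f (v + u) - f (0 + u) = f v - f 0" for v using linear_add[OF l, of v u] by simp
  then show ?thesis using l by (simp add: affine_maps_iff_linear)
qed

lemma affine_maps_product_decomp:
  assumes "f \<in> affine_maps"
  shows "linear (\<lambda>x. f (x, 0) - f (0, 0))" and "linear (\<lambda>z. f (0, z) - f (0, 0))"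
    and "f (x, z) = f (x, 0) + f (0, z) - f (0, 0)"
proof -
  define l where "l v = f v - f 0" for v
  have l: "linear l" using assms by (simp add: affine_maps_iff_linear l_def[abs_def])
  have "linear (l \<circ> (\<lambda>x. (x, 0)))" "linear (l \<circ> (\<lambda>z. (0, z)))"
    by (intro linear_compose[OF _ l]; simp add: linear_iff)+
  then show "linear (\<lambda>x. f (x, 0) - f (0, 0))" "linear (\<lambda>z. f (0, z) - f (0, 0))"
    by (simp_all add: l_def o_def zero_prod_def)
  have "l (x, z) = l (x, 0) + l (0, z)" using linear_add[OF l, of "(x, 0)" "(0, z)"] by simp
  then show "f (x, z) = f (x, 0) + f (0, z) - f (0, 0)" by (simp add: l_def zero_prod_def)
qed

section \<open>Vertical differences\<close>

definition vdiff :: "'b::real_vector \<Rightarrow> ('a::real_vector \<times> 'b \<Rightarrow> real) \<Rightarrow> 'a \<times> 'b \<Rightarrow> real" where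
  "vdiff v F p = F (p + (0, v)) - F p"

lemma vdiff_commute: "vdiff u (vdiff v F) = vdiff v (vdiff u F)"
  by (rule ext) (simp add: vdiff_def algebra_simps)

lemma vdiff_zero_fun: "vdiff v (\<lambda>_. 0) = (\<lambda>_. 0)"
  by (rule ext) (simp add: vdiff_def)

lemma vdiff_add: "vdiff (u + v) F = (\<lambda>p. vdiff u F (p + (0, v)) + vdiff v F p)"
  by (rule ext) (simp add: vdiff_def algebra_simps)

lemma carnot_mult_translate_vertical: "carnot_mult br (p + (0, v)) q = carnot_mult br p q + (0, v)"
  by (simp add: carnot_mult_def)

lemma vdiff_h_affine: "F \<in> h_affine_maps br \<Longrightarrow> vdiff v F \<in> h_affine_maps br"
  unfolding h_affine_maps_def vdiff_def
  by (auto simp flip: carnot_mult_translate_vertical intro: affine_real_fun_diff)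

section \<open>Horizontally affine maps\<close>

locale skew_bracket =
  fixes br :: "'a::real_vector \<Rightarrow> 'a \<Rightarrow> 'b::real_vector"
  assumes bilinear_br: "bilinear br" and skew: "br x y = - br y x"
begin

abbreviation brackets :: "'b set" where
  "brackets \<equiv> range (\<lambda>(x, y). br x y)"

lemmas br_simps = bilinear_ladd[OF bilinear_br] bilinear_radd[OF bilinear_br]
  bilinear_lmul[OF bilinear_br] bilinear_rmul[OF bilinear_br]
  bilinear_lneg[OF bilinear_br] bilinear_rneg[OF bilinear_br]
  bilinear_lsub[OF bilinear_br] bilinear_rsub[OF bilinear_br]
  bilinear_lzero[OF bilinear_br] bilinear_rzero[OF bilinear_br]

lemma br_self [simp]: "br x x = 0"
proof -
  have "2 *\<^sub>R br x x = 0" using skew[of x x] by (simp add: scaleR_2 eq_neg_iff_add_eq_0)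
  then show ?thesis by simp
qed

lemma h_affine_maps_iff:
  "f \<in> h_affine_maps br \<longleftrightarrow> (\<forall>x z y. affine_real_fun (\<lambda>t. f (x + t *\<^sub>R y, z + t *\<^sub>R br x y)))"
  unfolding h_affine_maps_def carnot_mult_def by (auto simp: br_simps)

lemma h_affine_vertical_bracket:
  assumes "f \<in> h_affine_maps br"
  shows "affine_real_fun (\<lambda>t. f (x, z + t *\<^sub>R br u y))"
proof -
  have line: "affine_real_fun (\<lambda>t. f (x + t *\<^sub>R y, z + t *\<^sub>R br x y))" for x z y
    using assms h_affine_maps_iff by blast
  text \<open>\<open>(x, z + t [u, y])\<close> is the midpoint of the horizontal segment through it in direction
    \<open>u + t y\<close>, whose endpoints move along horizontal lines as \<open>t\<close> varies.\<close>
  have midpoint: "f (x, z + t *\<^sub>R br u y) =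
      (f (x + u + t *\<^sub>R y, z + br x u + t *\<^sub>R br (x + u) y)
       + f (x - u + t *\<^sub>R (- y), z - br x u + t *\<^sub>R br (x - u) (- y))) / 2" for t
  proof -
    let ?v = "u + t *\<^sub>R y"
    have "affine_real_fun (\<lambda>s. f (x + s *\<^sub>R ?v, (z + t *\<^sub>R br u y) + s *\<^sub>R br x ?v))"
      by (rule line)
    from this[unfolded affine_real_fun_iff, rule_format, of "- 1"] show ?thesis
      by (simp add: br_simps algebra_simps)
  qed
  show ?thesis
    unfolding midpoint by (intro affine_real_fun_scale[where c = "1 / 2", simplified] affine_real_fun_add line)
qed

lemma vdiff_scale_bracket:
  assumes "F \<in> h_affine_maps br" and "w \<in> brackets"
  shows "vdiff (c *\<^sub>R w) F = (\<lambda>p. c * vdiff w F p)"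
proof
  fix p :: "'a \<times> 'b"
  obtain x z where p: "p = (x, z)" by fastforce
  from \<open>w \<in> brackets\<close> obtain u y where w: "w = br u y" by auto
  have "affine_real_fun (\<lambda>t. F (x, z + t *\<^sub>R w))"
    unfolding w using assms(1) by (rule h_affine_vertical_bracket)
  from this[unfolded affine_real_fun_iff, rule_format, of c] show "vdiff (c *\<^sub>R w) F p = c * vdiff w F p"
    by (simp add: vdiff_def p)
qed

lemma vdiff_bracket_twice:
  assumes "F \<in> h_affine_maps br" and "w \<in> brackets"
  shows "vdiff w (vdiff w F) = (\<lambda>_. 0)"
proof
  fix p
  have "vdiff w F (p + (0, w)) + vdiff w F p = vdiff (2 *\<^sub>R w) F p"
    by (simp add: vdiff_add scaleR_2)
  also have "\<dots> = 2 * vdiff w F p" by (simp add: vdiff_scale_bracket[OF assms])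
  finally show "vdiff w (vdiff w F) p = 0" by (simp add: vdiff_def)
qed

lemma independent_brackets_if_dual_form:
  fixes b :: "'a \<Rightarrow> 'b \<Rightarrow> real"
  assumes b: "bilinear b" and alt: "\<And>x x'. b x (br x x') = 0" and one: "b x1 (br x2 x3) = 1"
  shows "independent {br x1 x2, br x1 x3, br x2 x3} \<and> card {br x1 x2, br x1 x3, br x2 x3} = 3"
proof -
  have swap: "b y (br x z) = - b x (br y z)" for x y z
  proof -
    have "b (x + y) (br (x + y) z) = 0" by (rule alt)
    then show ?thesis
      using alt[of x z] alt[of y z] by (simp add: br_simps bilinear_ladd[OF b] bilinear_radd[OF b])
  qed
  let ?a = "br x1 x2" and ?c = "br x1 x3" and ?d = "br x2 x3"
  have x1: "b x1 ?a = 0" "b x1 ?c = 0" "b x1 ?d = 1"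
    using alt one by auto
  have x2: "b x2 ?a = 0" "b x2 ?c = -1" "b x2 ?d = 0"
    using swap[of x1 x2 x2] swap[of x1 x2 x3] alt one by (auto simp: bilinear_rzero[OF b])
  have x3: "b x3 ?a = 1" "b x3 ?c = 0" "b x3 ?d = 0"
    using swap[of x1 x3 x2] skew[of x3 x2] swap[of x1 x3 x3] swap[of x2 x3 x3] one
    by (auto simp: bilinear_rneg[OF b] bilinear_rzero[OF b])
  have distinct: "?a \<noteq> ?c" "?a \<noteq> ?d" "?c \<noteq> ?d" using x1 x2 by auto
  have "independent {?a, ?c, ?d}"
  proof
    assume "dependent {?a, ?c, ?d}"
    then obtain k where k: "\<exists>v\<in>{?a, ?c, ?d}. k v \<noteq> 0" "(\<Sum>v\<in>{?a, ?c, ?d}. k v *\<^sub>R v) = 0"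
      by (auto simp: dependent_finite)
    then have comb: "k ?a *\<^sub>R ?a + k ?c *\<^sub>R ?c + k ?d *\<^sub>R ?d = 0"
      using distinct by (simp add: add.assoc)
    have eval: "b x (k ?a *\<^sub>R ?a + k ?c *\<^sub>R ?c + k ?d *\<^sub>R ?d) = k ?a * b x ?a + k ?c * b x ?c + k ?d * b x ?d" for x
      by (simp add: bilinear_radd[OF b] bilinear_rmul[OF b])
    have "k ?d = 0" "k ?c = 0" "k ?a = 0"
      using eval[of x1] eval[of x2] eval[of x3] x1 x2 x3 unfolding comb by (simp_all add: bilinear_rzero[OF b])
    then show False using k(1) by auto
  qed
  then show ?thesis using distinct by simp
qed

end

locale step2_bracket = skew_bracket br for br :: "'a::real_vector \<Rightarrow> 'a \<Rightarrow> 'b::euclidean_space" +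
  assumes span_brackets: "span (range (\<lambda>(x, y). br x y)) = UNIV"
begin

lemma vdiff_affine_if_affine_on_spanning:
  assumes F: "F \<in> h_affine_maps br" and spanning: "span B = UNIV" and "B \<subseteq> brackets"
    and affine_on_B: "\<And>w. w \<in> B \<Longrightarrow> vdiff w F \<in> affine_maps"
  shows "vdiff v F \<in> affine_maps"
proof -
  let ?S = "{v. \<forall>c. vdiff (c *\<^sub>R v) F \<in> affine_maps}"
  have "subspace ?S"
    unfolding subspace_def
  proof (intro conjI ballI allI)
    have "vdiff 0 F = (\<lambda>_. 0)" by (rule ext) (simp add: vdiff_def flip: zero_prod_def)
    then show "0 \<in> ?S" by (simp add: affine_maps_zero)
  next
    fix u v
    assume "u \<in> ?S" "v \<in> ?S"
    then have "(\<lambda>p. vdiff (c *\<^sub>R u) F (p + (0, c *\<^sub>R v)) + vdiff (c *\<^sub>R v) F p) \<in> affine_maps" for c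
      by (intro affine_maps_add affine_maps_translate) auto
    then show "u + v \<in> ?S" by (simp add: vdiff_add scaleR_add_right)
  next
    fix c u assume "u \<in> ?S"
    then show "c *\<^sub>R u \<in> ?S" by simp
  qed
  moreover have "B \<subseteq> ?S"
  proof
    fix w assume "w \<in> B"
    moreover from \<open>w \<in> B\<close> have "w \<in> brackets" using \<open>B \<subseteq> brackets\<close> by blast
    ultimately show "w \<in> ?S"
      using affine_maps_scale[OF affine_on_B] by (simp add: vdiff_scale_bracket[OF F])
  qed
  ultimately have "v \<in> ?S" using spanning span_minimal by blast
  then show ?thesis by (metis (mono_tags) mem_Collect_eq scaleR_one)
qed

lemma dual_form_if_nonzero:
  fixes c :: "'a \<Rightarrow> 'b \<Rightarrow> real"
  assumes c: "bilinear c" and alt: "\<And>x x'. c x (br x x') = 0" and nonzero: "c x z \<noteq> 0"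
  obtains b :: "'a \<Rightarrow> 'b \<Rightarrow> real" and x1 x2 x3 where "bilinear b" "\<And>x x'. b x (br x x') = 0" "b x1 (br x2 x3) = 1"
proof -
  have "\<exists>w\<in>brackets. c x w \<noteq> 0"
  proof (rule ccontr)
    assume "\<not> ?thesis"
    moreover have "linear (c x)" using c by (simp add: bilinear_def)
    ultimately have "c x z = 0"
      by (intro linear_eq_0_on_span[of "c x" brackets z]) (auto simp: span_brackets)
    then show False using nonzero by simp
  qed
  then obtain x2 x3 where k: "c x (br x2 x3) \<noteq> 0" by auto
  let ?b = "\<lambda>x' z'. c x' z' / c x (br x2 x3)"
  have "bilinear ?b"
    using c by (simp add: bilinear_def linear_iff add_divide_distrib)
  moreover have "?b x' (br x' x'') = 0" for x' x'' by (simp add: alt)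
  moreover have "?b x (br x2 x3) = 1" using k by simp
  ultimately show ?thesis by (rule that[of ?b x x2 x3])
qed

lemma exists_nonaffine_with_affine_vdiffs:
  assumes "F \<in> h_affine_maps br" and "F \<notin> affine_maps"
  obtains G where "G \<in> h_affine_maps br" "G \<notin> affine_maps" "\<And>v. vdiff v G \<in> affine_maps"
proof -
  obtain B where B: "B \<subseteq> brackets" "independent B" "brackets \<subseteq> span B"
    by (rule maximal_independent_subset)
  have "finite B" using B(2) by (rule finiteI_independent)
  have spanning: "span B = UNIV"
    using B(3) span_brackets by (metis span_minimal subspace_span top.extremum_uniqueI)
  text \<open>Descent on the number of basis directions in which a vertical difference does not vanish:
    passing from \<open>F\<close> to \<open>vdiff w F\<close> kills the direction \<open>w\<close> and creates no new one.\<close>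
  have "\<exists>G. G \<in> h_affine_maps br \<and> G \<notin> affine_maps \<and> (\<forall>w\<in>B. vdiff w G \<in> affine_maps)"
    using assms
  proof (induction "card {w \<in> B. vdiff w F \<noteq> (\<lambda>_. 0)}" arbitrary: F rule: less_induct)
    case less
    show ?case
    proof (cases "\<forall>w\<in>B. vdiff w F \<in> affine_maps")
      case True
      then show ?thesis using less.prems by blast
    next
      case False
      then obtain w where w: "w \<in> B" "vdiff w F \<notin> affine_maps" by blast
      let ?support = "\<lambda>G. {u \<in> B. vdiff u G \<noteq> (\<lambda>_. 0)}"
      have "?support (vdiff w F) \<subseteq> ?support F"
        by (auto simp: vdiff_commute[of _ w] vdiff_zero_fun)
      moreover have "w \<in> ?support F" using w affine_maps_zero by auto
      moreover have "w \<notin> ?support (vdiff w F)"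
        using vdiff_bracket_twice[OF less.prems(1)] w(1) B(1) by auto
      ultimately have "card (?support (vdiff w F)) < card (?support F)"
        using \<open>finite B\<close> by (intro psubset_card_mono) auto
      then show ?thesis using less.hyps vdiff_h_affine[OF less.prems(1)] w(2) by blast
    qed
  qed
  then show ?thesis
    using that vdiff_affine_if_affine_on_spanning[OF _ spanning B(1)] by blast
qed

end

section \<open>Horizontally affine maps with affine vertical differences\<close>

locale affine_vdiff_map = step2_bracket br for br :: "'a::real_vector \<Rightarrow> 'a \<Rightarrow> 'b::euclidean_space" +
  fixes F :: "'a \<times> 'b \<Rightarrow> real"
  assumes h_affine: "F \<in> h_affine_maps br" and vdiff_affine: "\<And>v. vdiff v F \<in> affine_maps"
begin

text \<open>Writing \<open>F (x, z) = F (0, 0) + \<lambda> x + \<mu> z + Q (z, z) / 2 + B (x, z)\<close>, we have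
  \<open>hpart = \<lambda>\<close>, \<open>mixed = B\<close>, \<open>vpolar = Q\<close> and \<open>vpart z = \<mu> z + Q (z, z) / 2\<close>.\<close>

definition hpart :: "'a \<Rightarrow> real" where
  "hpart x = F (x, 0) - F (0, 0)"

definition vpart :: "'b \<Rightarrow> real" where
  "vpart z = F (0, z) - F (0, 0)"

definition mixed :: "'a \<Rightarrow> 'b \<Rightarrow> real" where
  "mixed x z = F (x, z) - F (x, 0) - F (0, z) + F (0, 0)"

definition vpolar :: "'b \<Rightarrow> 'b \<Rightarrow> real" where
  "vpolar z v = vpart (z + v) - vpart z - vpart v"

lemma F_decomp: "F (x, z) = F (0, 0) + hpart x + vpart z + mixed x z"
  by (simp add: hpart_def vpart_def mixed_def)

lemma bilinear_mixed: "bilinear mixed"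
proof -
  have mixed_vdiff: "mixed x z = vdiff z F (x, 0) - vdiff z F (0, 0)" for x z
    by (simp add: mixed_def vdiff_def)
  have "linear (\<lambda>x. mixed x z)" for z
    unfolding mixed_vdiff by (rule affine_maps_product_decomp(1)[OF vdiff_affine])
  moreover have "linear (mixed x)" for x
  proof (rule additive_homogeneous_on_spanning_imp_linear[OF _ _ span_brackets])
    show "mixed x (z + v) = mixed x z + mixed x v" for z v
      using affine_maps_product_decomp(3)[OF vdiff_affine, of v x z]
      by (simp add: mixed_def vdiff_def algebra_simps)
    show "mixed x (c *\<^sub>R w) = c *\<^sub>R mixed x w" if "w \<in> brackets" for c w
      using that by (simp add: mixed_vdiff vdiff_scale_bracket[OF h_affine] algebra_simps)
  qed
  ultimately show ?thesis by (simp add: bilinear_def)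
qed

lemma vpolar_commute: "vpolar z v = vpolar v z"
  by (simp add: vpolar_def add.commute)

lemma bilinear_vpolar: "bilinear vpolar"
proof -
  have "vpolar z v = vdiff v F (0, z) - vdiff v F (0, 0)" for z v
    by (simp add: vpolar_def vpart_def vdiff_def)
  then have "linear (\<lambda>z. vpolar z v)" for v
    using affine_maps_product_decomp(2)[OF vdiff_affine] by presburger
  then show ?thesis by (simp add: bilinear_def vpolar_commute[of _ v for v])
qed

lemma vpolar_expand: "vpolar (z + v) (z + v) = vpolar z z + 2 * vpolar z v + vpolar v v"
  using bilinear_vpolar vpolar_commute[of v z] by (simp add: bilinear_ladd bilinear_radd)

lemma vpart_scale_bracket: "w \<in> brackets \<Longrightarrow> vpart (c *\<^sub>R w) = c * vpart w"
proof -
  assume "w \<in> brackets"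
  have "vpart u = vdiff u F (0, 0)" for u by (simp add: vpart_def vdiff_def)
  then show ?thesis using vdiff_scale_bracket[OF h_affine \<open>w \<in> brackets\<close>] by simp
qed

lemma vpolar_bracket_self: "w \<in> brackets \<Longrightarrow> vpolar w w = 0"
  using vpart_scale_bracket[of w 2] by (simp add: vpolar_def scaleR_2)

lemma linear_vpart_minus_half_vpolar: "linear (\<lambda>z. vpart z - vpolar z z / 2)"
proof (rule additive_homogeneous_on_spanning_imp_linear[OF _ _ span_brackets])
  show "vpart (z + v) - vpolar (z + v) (z + v) / 2
      = (vpart z - vpolar z z / 2) + (vpart v - vpolar v v / 2)" for z v
    unfolding vpolar_expand by (simp add: vpolar_def field_simps)
  show "vpart (c *\<^sub>R w) - vpolar (c *\<^sub>R w) (c *\<^sub>R w) / 2 = c *\<^sub>R (vpart w - vpolar w w / 2)"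
    if "w \<in> brackets" for c w
    using that bilinear_vpolar
    by (simp add: vpart_scale_bracket vpolar_bracket_self bilinear_lmul bilinear_rmul)
qed

lemma hpart_scale: "hpart (t *\<^sub>R x) = t * hpart x"
proof -
  have "affine_real_fun (\<lambda>t. F (0 + t *\<^sub>R x, 0 + t *\<^sub>R br 0 x))"
    using h_affine h_affine_maps_iff by blast
  from this[unfolded affine_real_fun_iff, rule_format, of t] show ?thesis
    by (simp add: hpart_def br_simps)
qed

lemma hpart_along_horizontal_line:
  "\<exists>P R. \<forall>t. hpart (x + t *\<^sub>R y) = P + R * t - t\<^sup>2 * mixed y (br x y)"
proof -
  let ?w = "br x y"
  have w: "?w \<in> brackets" by auto
  have "affine_real_fun (\<lambda>t. F (x + t *\<^sub>R y, 0 + t *\<^sub>R ?w))"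
    using h_affine h_affine_maps_iff by blast
  then obtain A C where line: "F (x + t *\<^sub>R y, t *\<^sub>R ?w) = A * t + C" for t
    by (auto simp: affine_real_fun_def)
  have "F (x + t *\<^sub>R y, t *\<^sub>R ?w)
      = F (0, 0) + hpart (x + t *\<^sub>R y) + t * vpart ?w + t * mixed x ?w + t\<^sup>2 * mixed y ?w" for t
    using F_decomp[of "x + t *\<^sub>R y" "t *\<^sub>R ?w"] vpart_scale_bracket[OF w, of t] bilinear_mixed
    by (simp add: bilinear_ladd bilinear_lmul bilinear_rmul power2_eq_square algebra_simps)
  then have "hpart (x + t *\<^sub>R y) = (C - F (0, 0)) + (A - vpart ?w - mixed x ?w) * t - t\<^sup>2 * mixed y ?w" for t
    using line[of t] by (simp add: algebra_simps)
  then show ?thesis by blast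
qed

lemma mixed_bracket_zero: "mixed y (br x y) = 0"
proof -
  let ?q = "mixed y (br x y)"
  obtain P R where line: "\<And>t. hpart (x + t *\<^sub>R y) = P + R * t - t\<^sup>2 * ?q"
    using hpart_along_horizontal_line by blast
  obtain P2 R2 where line2: "\<And>t. hpart (2 *\<^sub>R x + t *\<^sub>R y) = P2 + R2 * t - t\<^sup>2 * mixed y (br (2 *\<^sub>R x) y)"
    using hpart_along_horizontal_line by blast
  have "mixed y (br (2 *\<^sub>R x) y) = 2 * ?q"
    using bilinear_mixed by (simp add: br_simps bilinear_rmul)
  text \<open>Homogeneity of \<open>hpart\<close> gives a second value, \<open>- ?q / 2\<close> instead of \<open>- 2 ?q\<close>, for the
    quadratic coefficient along the line through \<open>2 x\<close>.\<close>
  moreover have "hpart (2 *\<^sub>R x + t *\<^sub>R y) = 2 * hpart (x + (t / 2) *\<^sub>R y)" for t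
    using hpart_scale[of 2 "x + (t / 2) *\<^sub>R y"] by (simp add: scaleR_add_right)
  ultimately have "P2 + R2 * t - t\<^sup>2 * (2 * ?q) = 2 * (P + R * (t / 2) - (t / 2)\<^sup>2 * ?q)" for t
    using line[of "t / 2"] line2[of t] by simp
  from this[of 0] this[of 1] this[of "- 1"] show ?thesis
    by (simp add: power2_eq_square field_simps)
qed

lemma linear_hpart: "linear hpart"
proof -
  have line: "hpart (x + t *\<^sub>R y) = hpart x + t * (hpart (x + y) - hpart x)" for x y t
  proof -
    obtain P R where "\<And>t. hpart (x + t *\<^sub>R y) = P + R * t - t\<^sup>2 * mixed y (br x y)"
      using hpart_along_horizontal_line by blast
    from this[of t] this[of 0] this[of 1] show ?thesis by (simp add: mixed_bracket_zero)
  qed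
  have "hpart (x + y) = hpart x + hpart y" for x y
  proof -
    have "(1 / 2) *\<^sub>R (x + y) = x + (1 / 2) *\<^sub>R (y - x)"
      by (simp add: algebra_simps flip: scaleR_add_left)
    then have "hpart (x + y) = 2 * hpart (x + (1 / 2) *\<^sub>R (y - x))"
      using hpart_scale[of "1 / 2" "x + y"] by simp
    then show ?thesis unfolding line by (simp add: field_simps)
  qed
  then show ?thesis by (intro linearI) (simp_all add: hpart_scale)
qed

lemma affine_if_mixed_vpolar_zero:
  assumes "\<And>x z. mixed x z = 0" and "\<And>z. vpolar z z = 0"
  shows "F \<in> affine_maps"
proof -
  let ?l = "\<lambda>p. hpart (fst p) + (vpart (snd p) - vpolar (snd p) (snd p) / 2)"
  have "linear ?l"
    using linear_compose[OF linear_fst linear_hpart] linear_compose[OF linear_snd linear_vpart_minus_half_vpolar]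
    by (auto dest: linear_compose_add simp: o_def)
  moreover have "F p = ?l p + F (0, 0)" for p
    using F_decomp[of "fst p" "snd p"] assms by simp
  ultimately show ?thesis unfolding affine_maps_def by blast
qed

lemma exists_dual_form_if_mixed_nonzero:
  assumes "mixed x z \<noteq> 0"
  obtains b :: "'a \<Rightarrow> 'b \<Rightarrow> real" and x1 x2 x3 where
    "bilinear b" "\<And>x x'. b x (br x x') = 0" "b x1 (br x2 x3) = 1"
proof -
  have "mixed x' (br x' x'') = 0" for x' x''
    using mixed_bracket_zero[of x' x''] skew[of x' x''] bilinear_mixed by (simp add: bilinear_rneg)
  then show ?thesis by (rule dual_form_if_nonzero[OF bilinear_mixed _ assms]) (rule that)
qed

lemma exists_dual_form_if_vpolar_nonzero:
  assumes "vpolar z z \<noteq> 0"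
  obtains b :: "'a \<Rightarrow> 'b \<Rightarrow> real" and x1 x2 x3 where
    "bilinear b" "\<And>x x'. b x (br x x') = 0" "b x1 (br x2 x3) = 1"
proof -
  have "\<exists>w\<in>brackets. vpolar w z \<noteq> 0"
  proof (rule ccontr)
    assume "\<not> ?thesis"
    moreover have "linear (\<lambda>w. vpolar w z)" using bilinear_vpolar by (simp add: bilinear_def)
    ultimately have "vpolar z z = 0"
      by (intro linear_eq_0_on_span[of "\<lambda>w. vpolar w z" brackets z]) (auto simp: span_brackets)
    with assms show False by simp
  qed
  then obtain x u where nonzero: "vpolar (br x u) z \<noteq> 0" by auto
  let ?c = "\<lambda>x' z'. vpolar (br x' u) z'"
  have "bilinear ?c"
    unfolding bilinear_def
  proof (intro allI conjI)
    show "linear (?c x')" for x' using bilinear_vpolar by (simp add: bilinear_def)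
    fix z'
    have "linear (\<lambda>x'. br x' u)" "linear (\<lambda>w. vpolar w z')"
      using bilinear_br bilinear_vpolar by (simp_all add: bilinear_def)
    from linear_compose[OF this] show "linear (\<lambda>x'. ?c x' z')" by (simp add: o_def)
  qed
  moreover have "?c x' (br x' x'') = 0" for x' x''
  proof -
    have "br x' (u + x'') \<in> brackets" "br x' u \<in> brackets" "br x' x'' \<in> brackets" by auto
    then show ?thesis
      using vpolar_expand[of "br x' u" "br x' x''"] by (simp add: vpolar_bracket_self br_simps)
  qed
  ultimately show ?thesis by (rule dual_form_if_nonzero[of ?c x z, OF _ _ nonzero]) (rule that)
qed

lemma exists_dual_form:
  assumes "F \<notin> affine_maps"
  obtains b :: "'a \<Rightarrow> 'b \<Rightarrow> real" and x1 x2 x3 where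
    "bilinear b" "\<And>x x'. b x (br x x') = 0" "b x1 (br x2 x3) = 1"
proof (cases "\<exists>x z. mixed x z \<noteq> 0")
  case True
  then obtain x z where "mixed x z \<noteq> 0" by blast
  then show ?thesis by (rule exists_dual_form_if_mixed_nonzero) (rule that)
next
  case False
  then obtain z where "vpolar z z \<noteq> 0" using affine_if_mixed_vpolar_zero assms by blast
  then show ?thesis by (rule exists_dual_form_if_vpolar_nonzero) (rule that)
qed

end

theorem proposition6p8:
  fixes br :: "'a::euclidean_space \<Rightarrow> 'a \<Rightarrow> 'b::euclidean_space"
  assumes "step2_carnot br"
    and "affine_maps \<subset> h_affine_maps br"
  shows "\<exists>x1 x2 x3.
           independent {br x1 x2, br x1 x3, br x2 x3} \<and> card {br x1 x2, br x1 x3, br x2 x3} = 3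
           \<and> (\<exists>b :: 'a \<Rightarrow> 'b \<Rightarrow> real. bilinear b \<and> (\<forall>x x'. b x (br x x') = 0) \<and> b x1 (br x2 x3) = 1)"
proof -
  have "step2_bracket br"
    using assms(1) unfolding step2_carnot_def by unfold_locales blast+
  then interpret step2_bracket br .
  obtain F where "F \<in> h_affine_maps br" "F \<notin> affine_maps" using assms(2) by blast
  then obtain G where G: "G \<in> h_affine_maps br" "G \<notin> affine_maps" "\<And>v. vdiff v G \<in> affine_maps"
    by (rule exists_nonaffine_with_affine_vdiffs) blast
  interpret affine_vdiff_map br G using G(1,3) by unfold_locales
  obtain b :: "'a \<Rightarrow> 'b \<Rightarrow> real" and x1 x2 x3
    where b: "bilinear b" "\<And>x x'. b x (br x x') = 0" "b x1 (br x2 x3) = 1"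
    using G(2) by (rule exists_dual_form) blast
  with independent_brackets_if_dual_form[OF b] show ?thesis by blast
qed

end
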